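(* In the setting of the context, for each of the following six families of linear inequalities in $(\mathbf x,\mathbf y)\in\mathbb R^{2T}$, and for any given point $(\mathbf x,\mathbf y)\in\mathbb R_+^{2T}$, a most violated inequality of the family can be determined in $O(T)$ time if a violated inequality of the family exists. Here $\sigma=\lfloor(\overline C-\overline V)/V\rfloor$ and $\eta$ denotes a real parameter. (F1) $x_t\le\overline C y_t-\sum_{s\in\mathcal S}(\overline C-\overline V-sV)(y_{t-s}-y_{t-s-1})$ over all $\mathcal S\subseteq[0,\min\{L-1,T-2,\sigma\}]_{\mathbb Z}$ and $t\in[1,T]_{\mathbb Z}$ with $t\ge s+2$ for all $s\in\mathcal S$. (F2) $x_t\le\overline C y_t-\sum_{s\in\mathcal S}(\overline C-\overline V-sV)(y_{t+s}-y_{t+s+1})$ over the same $\mathcal S$ and $t\in[1,T]_{\mathbb Z}$ with $t\le T-s-1$ for all $s\in\mathcal S$. (F3) $x_t\le(\overline C-\eta V)y_t+\eta Vy_{t+1}-\sum_{s\in\mathcal S}(\overline C-\overline V-sV)(y_{t-s}-y_{t-s-1})$ over all $\mathcal S\subseteq[0,\min\{L-1,T-3,\sigma\}]_{\mathbb Z}$, real $\eta\in[0,\min\{L-1,(\overline C-\overline V)/V\}]$, and $t\in[1,T-1]_{\mathbb Z}$ with $t\ge s+2$ for all $s\in\mathcal S$. (F4) $x_t\le(\overline C-\eta V)y_t+\eta Vy_{t-1}-\sum_{s\in\mathcal S}(\overline C-\overline V-sV)(y_{t+s}-y_{t+s+1})$ over the same $\mathcal S,\eta$ as in (F3) and $t\in[2,T]_{\mathbb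 Z}$ with $t\le T-s-1$ for all $s\in\mathcal S$. (F5) $x_t\le(\overline V+\eta V)y_t+(\overline C-\overline V-\eta V)y_{t-1}-\sum_{s\in\mathcal S}(\overline C-\overline V-sV)(y_{t-s}-y_{t-s-1})$ over all $\mathcal S\subseteq[1,\min\{L,T-2,\sigma\}]_{\mathbb Z}$, real $\eta\in[0,\min\{L,(\overline C-\overline V)/V\}]$, and $t\in[2,T]_{\mathbb Z}$ with $t\ge s+2$ for all $s\in\mathcal S$. (F6) $x_t\le(\overline V+\eta V)y_t+(\overline C-\overline V-\eta V)y_{t+1}-\sum_{s\in\mathcal S}(\overline C-\overline V-sV)(y_{t+s}-y_{t+s+1})$ over the same $\mathcal S,\eta$ as in (F5) and $t\in[1,T-1]_{\mathbb Z}$ with $t\le T-s-1$ for all $s\in\mathcal S$.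
   Context: For integers $a,b$, $[a,b]_{\mathbb Z}=\{a,a+1,\dots,b\}$ if $a\le b$ and $\emptyset$ otherwise. Fix a positive integer $T$, a positive integer $L$ (minimum up time), and reals $\overline C,\underline C,V,\overline V$ with $\overline C>\underline C>0$, $V>0$, $\overline V+V\le\overline C$ and $\underline C<\overline V<\underline C+V$; $\mathbf x=(x_1,\dots,x_T)$, $\mathbf y=(y_1,\dots,y_T)$. For an inequality $a^\top(\mathbf x,\mathbf y)\le b$, its violation at a given point is $a^\top(\mathbf x,\mathbf y)-b$; it is violated if this is positive, and a most violated inequality of a family is one maximizing this quantity over the family. Time is measured in arithmetic operations and comparisons on the input numbers. *)

theory Defs
  imports Complex_Main
begin

text \<open>An inequality of a family is identified by (S, t, eta); for families without eta, eta = 0.\<close>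
type_synonym ineq = "int set \<times> int \<times> real"

definition sigma :: "real \<Rightarrow> real \<Rightarrow> real \<Rightarrow> int" where
  "sigma Cb Vb V = \<lfloor>(Cb - Vb) / V\<rfloor>"

definition bsum :: "real \<Rightarrow> real \<Rightarrow> real \<Rightarrow> (int \<Rightarrow> real) \<Rightarrow> int set \<Rightarrow> int \<Rightarrow> real" where
  "bsum Cb Vb V y S t = (\<Sum>s\<in>S. (Cb - Vb - real_of_int s * V) * (y (t - s) - y (t - s - 1)))"

definition fsum :: "real \<Rightarrow> real \<Rightarrow> real \<Rightarrow> (int \<Rightarrow> real) \<Rightarrow> int set \<Rightarrow> int \<Rightarrow> real" where
  "fsum Cb Vb V y S t = (\<Sum>s\<in>S. (Cb - Vb - real_of_int s * V) * (y (t + s) - y (t + s + 1)))"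

definition F1 :: "int \<Rightarrow> int \<Rightarrow> real \<Rightarrow> real \<Rightarrow> real \<Rightarrow> ineq set" where
  "F1 T L Cb Vb V = {(S, t, \<eta>). S \<subseteq> {0..min (L - 1) (min (T - 2) (sigma Cb Vb V))}
     \<and> 1 \<le> t \<and> t \<le> T \<and> (\<forall>s\<in>S. s + 2 \<le> t) \<and> \<eta> = 0}"

definition F2 :: "int \<Rightarrow> int \<Rightarrow> real \<Rightarrow> real \<Rightarrow> real \<Rightarrow> ineq set" where
  "F2 T L Cb Vb V = {(S, t, \<eta>). S \<subseteq> {0..min (L - 1) (min (T - 2) (sigma Cb Vb V))}
     \<and> 1 \<le> t \<and> t \<le> T \<and> (\<forall>s\<in>S. t \<le> T - s - 1) \<and> \<eta> = 0}"

definition F3 :: "int \<Rightarrow> int \<Rightarrow> real \<Rightarrow> real \<Rightarrow> real \<Rightarrow> ineq set" where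
  "F3 T L Cb Vb V = {(S, t, \<eta>). S \<subseteq> {0..min (L - 1) (min (T - 3) (sigma Cb Vb V))}
     \<and> 0 \<le> \<eta> \<and> \<eta> \<le> min (real_of_int (L - 1)) ((Cb - Vb) / V)
     \<and> 1 \<le> t \<and> t \<le> T - 1 \<and> (\<forall>s\<in>S. s + 2 \<le> t)}"

definition F4 :: "int \<Rightarrow> int \<Rightarrow> real \<Rightarrow> real \<Rightarrow> real \<Rightarrow> ineq set" where
  "F4 T L Cb Vb V = {(S, t, \<eta>). S \<subseteq> {0..min (L - 1) (min (T - 3) (sigma Cb Vb V))}
     \<and> 0 \<le> \<eta> \<and> \<eta> \<le> min (real_of_int (L - 1)) ((Cb - Vb) / V)
     \<and> 2 \<le> t \<and> t \<le> T \<and> (\<forall>s\<in>S. t \<le> T - s - 1)}"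

definition F5 :: "int \<Rightarrow> int \<Rightarrow> real \<Rightarrow> real \<Rightarrow> real \<Rightarrow> ineq set" where
  "F5 T L Cb Vb V = {(S, t, \<eta>). S \<subseteq> {1..min L (min (T - 2) (sigma Cb Vb V))}
     \<and> 0 \<le> \<eta> \<and> \<eta> \<le> min (real_of_int L) ((Cb - Vb) / V)
     \<and> 2 \<le> t \<and> t \<le> T \<and> (\<forall>s\<in>S. s + 2 \<le> t)}"

definition F6 :: "int \<Rightarrow> int \<Rightarrow> real \<Rightarrow> real \<Rightarrow> real \<Rightarrow> ineq set" where
  "F6 T L Cb Vb V = {(S, t, \<eta>). S \<subseteq> {1..min L (min (T - 2) (sigma Cb Vb V))}
     \<and> 0 \<le> \<eta> \<and> \<eta> \<le> min (real_of_int L) ((Cb - Vb) / V)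
     \<and> 1 \<le> t \<and> t \<le> T - 1 \<and> (\<forall>s\<in>S. t \<le> T - s - 1)}"

fun viol1 :: "real \<Rightarrow> real \<Rightarrow> real \<Rightarrow> (int \<Rightarrow> real) \<Rightarrow> (int \<Rightarrow> real) \<Rightarrow> ineq \<Rightarrow> real" where
  "viol1 Cb Vb V x y (S, t, \<eta>) = x t - (Cb * y t - bsum Cb Vb V y S t)"

fun viol2 :: "real \<Rightarrow> real \<Rightarrow> real \<Rightarrow> (int \<Rightarrow> real) \<Rightarrow> (int \<Rightarrow> real) \<Rightarrow> ineq \<Rightarrow> real" where
  "viol2 Cb Vb V x y (S, t, \<eta>) = x t - (Cb * y t - fsum Cb Vb V y S t)"

fun viol3 :: "real \<Rightarrow> real \<Rightarrow> real \<Rightarrow> (int \<Rightarrow> real) \<Rightarrow> (int \<Rightarrow> real) \<Rightarrow> ineq \<Rightarrow> real" where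
  "viol3 Cb Vb V x y (S, t, \<eta>) =
     x t - ((Cb - \<eta> * V) * y t + \<eta> * V * y (t + 1) - bsum Cb Vb V y S t)"

fun viol4 :: "real \<Rightarrow> real \<Rightarrow> real \<Rightarrow> (int \<Rightarrow> real) \<Rightarrow> (int \<Rightarrow> real) \<Rightarrow> ineq \<Rightarrow> real" where
  "viol4 Cb Vb V x y (S, t, \<eta>) =
     x t - ((Cb - \<eta> * V) * y t + \<eta> * V * y (t - 1) - fsum Cb Vb V y S t)"

fun viol5 :: "real \<Rightarrow> real \<Rightarrow> real \<Rightarrow> (int \<Rightarrow> real) \<Rightarrow> (int \<Rightarrow> real) \<Rightarrow> ineq \<Rightarrow> real" where
  "viol5 Cb Vb V x y (S, t, \<eta>) =
     x t - ((Vb + \<eta> * V) * y t + (Cb - Vb - \<eta> * V) * y (t - 1) - bsum Cb Vb V y S t)"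

fun viol6 :: "real \<Rightarrow> real \<Rightarrow> real \<Rightarrow> (int \<Rightarrow> real) \<Rightarrow> (int \<Rightarrow> real) \<Rightarrow> ineq \<Rightarrow> real" where
  "viol6 Cb Vb V x y (S, t, \<eta>) =
     x t - ((Vb + \<eta> * V) * y t + (Cb - Vb - \<eta> * V) * y (t + 1) - fsum Cb Vb V y S t)"

text \<open>Each internal node costs one unit: an arithmetic operation on two
registers (result appended), loading a constant, or a comparison branching the computation.\<close>

datatype aop = Add | Sub | Mul | Div

fun apply_aop :: "aop \<Rightarrow> real \<Rightarrow> real \<Rightarrow> real" where
  "apply_aop Add a b = a + b"
| "apply_aop Sub a b = a - b"
| "apply_aop Mul a b = a * b"
| "apply_aop Div a b = a / b"

datatype ctree =
    Leaf "int set" int nat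
  | Op aop nat nat ctree
  | Const real ctree
  | Cmp nat nat ctree ctree

fun run :: "ctree \<Rightarrow> real list \<Rightarrow> ineq \<times> nat" where
  "run (Leaf S t i) regs = ((S, t, regs ! i), 0)"
| "run (Op f i j tr) regs =
     (let r = run tr (regs @ [apply_aop f (regs ! i) (regs ! j)]) in (fst r, Suc (snd r)))"
| "run (Const c tr) regs = (let r = run tr (regs @ [c]) in (fst r, Suc (snd r)))"
| "run (Cmp i j tr1 tr2) regs =
     (let r = (if regs ! i \<le> regs ! j then run tr1 regs else run tr2 regs) in (fst r, Suc (snd r)))"

definition input_regs :: "int \<Rightarrow> real \<Rightarrow> real \<Rightarrow> real \<Rightarrow> real \<Rightarrow> (int \<Rightarrow> real) \<Rightarrow> (int \<Rightarrow> real) \<Rightarrow> real list" where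
  "input_regs T Cb Cu V Vb x y = [Cb, Cu, V, Vb] @ map x [1..T] @ map y [1..T]"

definition std_params :: "int \<Rightarrow> int \<Rightarrow> real \<Rightarrow> real \<Rightarrow> real \<Rightarrow> real \<Rightarrow> bool" where
  "std_params T L Cb Cu V Vb \<longleftrightarrow> 1 \<le> T \<and> 1 \<le> L \<and> Cb > Cu \<and> Cu > 0 \<and> V > 0
     \<and> Vb + V \<le> Cb \<and> Cu < Vb \<and> Vb < Cu + V"

definition most_violated_linear_time ::
  "(int \<Rightarrow> int \<Rightarrow> real \<Rightarrow> real \<Rightarrow> real \<Rightarrow> ineq set)
   \<Rightarrow> (real \<Rightarrow> real \<Rightarrow> real \<Rightarrow> (int \<Rightarrow> real) \<Rightarrow> (int \<Rightarrow> real) \<Rightarrow> ineq \<Rightarrow> real) \<Rightarrow> bool" where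
  "most_violated_linear_time fam viol \<longleftrightarrow>
    (\<exists>c::nat. \<forall>T L. 1 \<le> T \<longrightarrow> 1 \<le> L \<longrightarrow> (\<exists>tr. \<forall>Cb Cu V Vb x y.
       std_params T L Cb Cu V Vb \<and> (\<forall>t\<in>{1..T}. 0 \<le> x t \<and> 0 \<le> y t) \<longrightarrow>
       (let regs = input_regs T Cb Cu V Vb x y; r = run tr regs; q = fst r in
          snd r \<le> c * nat T \<and>
          ((\<exists>q'\<in>fam T L Cb Vb V. viol Cb Vb V x y q' > 0) \<longrightarrow>
             q \<in> fam T L Cb Vb V \<and> (\<forall>q'\<in>fam T L Cb Vb V. viol Cb Vb V x y q' \<le> viol Cb Vb V x y q)))))"

end

theory Submission
  imports Defs "HOL-Library.Sublist"
begin

(*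
  Fix t and eta. The violation is affine in the indicator of S, and the coefficient of s is
  (Cb - Vb - s V) (y (t - s) - y (t - s - 1)) (or the forward analogue). For s <= sigma the weight
  Cb - Vb - s V is nonnegative, so the best S keeps exactly the admissible s at which y increases,
  and the best eta is an endpoint of its interval, chosen by the sign of its coefficient. Writing
  d l = max 0 (y l - y (l - 1)), the weight of the best S at t is a combination of the prefix sums
  of d l and of l d l over an interval of indices, so after computing these prefix sums in O(T)
  steps every t is evaluated in O(1) steps, and a linear scan over t yields a most violated
  inequality. All six families are instances of one generic backward family: F2, F4 and F6 after
  reversing time, t \<mapsto> T + 1 - t, which turns forward sums into backward ones.
*)

section \<open>Programs building computation trees\<close>

definition add_cost :: "nat \<Rightarrow> ineq \<times> nat \<Rightarrow> ineq \<times> nat" where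
  "add_cost c r = (fst r, snd r + c)"

(* A program in continuation-passing style: it receives the current number of registers, which
   fixes the index of each register it appends, and a continuation taking its result and the new
   number of registers. *)
type_synonym 'a prog = "nat \<Rightarrow> ('a \<Rightarrow> nat \<Rightarrow> ctree) \<Rightarrow> ctree"

definition return_prog :: "'a \<Rightarrow> 'a prog" where
  "return_prog a = (\<lambda>n k. k a n)"

definition bind_prog :: "'a prog \<Rightarrow> ('a \<Rightarrow> 'b prog) \<Rightarrow> 'b prog" where
  "bind_prog p q = (\<lambda>n k. p n (\<lambda>a n'. q a n' k))"

definition const_prog :: "real \<Rightarrow> nat prog" where
  "const_prog c = (\<lambda>n k. Const c (k n (Suc n)))"

definition op_prog :: "aop \<Rightarrow> nat \<Rightarrow> nat \<Rightarrow> nat prog" where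
  "op_prog f i j = (\<lambda>n k. Op f i j (k n (Suc n)))"

definition if_le_prog :: "nat \<Rightarrow> nat \<Rightarrow> 'a prog \<Rightarrow> 'a prog \<Rightarrow> 'a prog" where
  "if_le_prog i j p q = (\<lambda>n k. Cmp i j (p n k) (q n k))"

fun loop_prog :: "(int \<Rightarrow> 's \<Rightarrow> 's prog) \<Rightarrow> int \<Rightarrow> nat \<Rightarrow> 's \<Rightarrow> 's prog" where
  "loop_prog body a 0 s = return_prog s"
| "loop_prog body a (Suc n) s = bind_prog (body a s) (loop_prog body (a + 1) n)"

definition prog_spec :: "'a prog \<Rightarrow> real list \<Rightarrow> ('a \<Rightarrow> real list \<Rightarrow> bool) \<Rightarrow> nat \<Rightarrow> bool" where
  "prog_spec p regs Q c \<longleftrightarrow> (\<forall>k. \<exists>a ext c'. c' \<le> c \<and> Q a (regs @ ext) \<and>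
     run (p (length regs) k) regs = add_cost c' (run (k a (length (regs @ ext))) (regs @ ext)))"

definition reg :: "real list \<Rightarrow> nat \<Rightarrow> real \<Rightarrow> bool" where
  "reg regs i v \<longleftrightarrow> i < length regs \<and> regs ! i = v"

lemma reg_append [simp]: "reg regs i v \<Longrightarrow> reg (regs @ ext) i v"
  by (simp add: reg_def nth_append_left)

lemma reg_prefix: "reg regs i v \<Longrightarrow> prefix regs regs' \<Longrightarrow> reg regs' i v"
  by (auto elim: prefixE)

lemma prog_spec_mono:
  assumes "prog_spec p regs Q c" and "\<And>a ext. Q a (regs @ ext) \<Longrightarrow> R a (regs @ ext)" and "c \<le> d"
  shows "prog_spec p regs R d"
  using assms unfolding prog_spec_def by (meson order_trans)

lemma prog_spec_return: "Q a regs \<Longrightarrow> prog_spec (return_prog a) regs Q c"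
  unfolding prog_spec_def return_prog_def
  by (intro allI exI[of _ a] exI[of _ "[]"] exI[of _ 0]) (simp add: add_cost_def)

(* The budget left after p is passed on as c - c1, so that applying the rule leaves no schematic
   costs in the goals. *)
lemma prog_spec_bind:
  assumes p: "prog_spec p regs Q c1" and c: "c1 \<le> c"
    and q: "\<And>a ext. Q a (regs @ ext) \<Longrightarrow> prog_spec (q a) (regs @ ext) R (c - c1)"
  shows "prog_spec (bind_prog p q) regs R c"
  unfolding prog_spec_def
proof
  fix k
  obtain a ext c1' where a: "c1' \<le> c1" "Q a (regs @ ext)"
    and run1: "run (p (length regs) (\<lambda>a n'. q a n' k)) regs
      = add_cost c1' (run (q a (length (regs @ ext)) k) (regs @ ext))"
    using p unfolding prog_spec_def by blast
  obtain b ext2 c2' where b: "c2' \<le> c - c1" "R b (regs @ ext @ ext2)"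
    and run2: "run (q a (length (regs @ ext)) k) (regs @ ext)
      = add_cost c2' (run (k b (length (regs @ ext @ ext2))) (regs @ ext @ ext2))"
    using q[OF a(2)] unfolding prog_spec_def by fastforce
  show "\<exists>b ext c'. c' \<le> c \<and> R b (regs @ ext) \<and>
      run (bind_prog p q (length regs) k) regs = add_cost c' (run (k b (length (regs @ ext))) (regs @ ext))"
    using a(1) b run1 run2 c by (intro exI[of _ b] exI[of _ "ext @ ext2"] exI[of _ "c2' + c1'"])
      (simp add: bind_prog_def add_cost_def)
qed

lemma prog_spec_const: "prog_spec (const_prog c) regs (\<lambda>i regs'. reg regs' i c) 1"
  unfolding prog_spec_def const_prog_def
  by (intro allI exI[of _ "length regs"] exI[of _ "[c]"] exI[of _ 1])
    (simp add: reg_def add_cost_def Let_def)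

lemma prog_spec_op:
  assumes "reg regs i u" "reg regs j v"
  shows "prog_spec (op_prog f i j) regs (\<lambda>l regs'. reg regs' l (apply_aop f u v)) 1"
  using assms unfolding prog_spec_def op_prog_def
  by (intro allI exI[of _ "length regs"] exI[of _ "[apply_aop f u v]"] exI[of _ 1])
    (simp add: reg_def add_cost_def Let_def)

lemma prog_spec_if_le:
  assumes "0 < c"
    and "regs ! i \<le> regs ! j \<Longrightarrow> prog_spec p regs Q (c - 1)"
    and "\<not> regs ! i \<le> regs ! j \<Longrightarrow> prog_spec q regs Q (c - 1)"
  shows "prog_spec (if_le_prog i j p q) regs Q c"
  unfolding prog_spec_def
proof
  fix k
  let ?r = "if regs ! i \<le> regs ! j then p else q"
  have "prog_spec ?r regs Q (c - 1)" using assms by simp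
  then obtain a ext c' where "c' \<le> c - 1" "Q a (regs @ ext)"
    "run (?r (length regs) k) regs = add_cost c' (run (k a (length (regs @ ext))) (regs @ ext))"
    unfolding prog_spec_def by blast
  then show "\<exists>a ext c'. c' \<le> c \<and> Q a (regs @ ext) \<and> run (if_le_prog i j p q (length regs) k) regs
      = add_cost c' (run (k a (length (regs @ ext))) (regs @ ext))"
    using assms(1) by (intro exI[of _ a] exI[of _ ext] exI[of _ "Suc c'"])
      (auto simp: if_le_prog_def add_cost_def Let_def split: if_splits)
qed

lemma prog_spec_loop:
  assumes "\<And>j s regs. a \<le> j \<Longrightarrow> j < a + int n \<Longrightarrow> I j s regs \<Longrightarrow> prog_spec (body j s) regs (I (j + 1)) c"
    and "I a s regs"
  shows "prog_spec (loop_prog body a n s) regs (I (a + int n)) (n * c)"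
  using assms
proof (induction n arbitrary: a s regs)
  case 0
  then show ?case by (simp add: prog_spec_return)
next
  case (Suc n)
  have "prog_spec (body a s) regs (I (a + 1)) c" using Suc.prems by simp
  then show ?case
    unfolding loop_prog.simps
  proof (rule prog_spec_bind, goal_cases)
    case (2 s' ext)
    then show ?case using Suc.IH[of "a + 1"] Suc.prems(1) by (simp add: add.assoc)
  qed simp
qed

datatype expr = Reg nat | Cst real | Bin aop expr expr

fun eval_expr :: "expr \<Rightarrow> real list \<Rightarrow> real" where
  "eval_expr (Reg i) regs = regs ! i"
| "eval_expr (Cst c) regs = c"
| "eval_expr (Bin f a b) regs = apply_aop f (eval_expr a regs) (eval_expr b regs)"

fun expr_cost :: "expr \<Rightarrow> nat" where
  "expr_cost (Reg i) = 0"
| "expr_cost (Cst c) = 1"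
| "expr_cost (Bin f a b) = expr_cost a + expr_cost b + 1"

fun regs_below :: "expr \<Rightarrow> nat \<Rightarrow> bool" where
  "regs_below (Reg i) n \<longleftrightarrow> i < n"
| "regs_below (Cst c) n \<longleftrightarrow> True"
| "regs_below (Bin f a b) n \<longleftrightarrow> regs_below a n \<and> regs_below b n"

fun expr_prog :: "expr \<Rightarrow> nat prog" where
  "expr_prog (Reg i) = return_prog i"
| "expr_prog (Cst c) = const_prog c"
| "expr_prog (Bin f a b) = bind_prog (expr_prog a) (\<lambda>i. bind_prog (expr_prog b) (\<lambda>j. op_prog f i j))"

lemma regs_below_mono: "regs_below e n \<Longrightarrow> n \<le> m \<Longrightarrow> regs_below e m"
  by (induction e) auto

lemma eval_expr_append: "regs_below e (length regs) \<Longrightarrow> eval_expr e (regs @ ext) = eval_expr e regs"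
  by (induction e) (auto simp: nth_append_left)

lemma prog_spec_expr:
  "regs_below e (length regs) \<Longrightarrow>
   prog_spec (expr_prog e) regs (\<lambda>i regs'. reg regs' i (eval_expr e regs)) (expr_cost e)"
proof (induction e arbitrary: regs)
  case (Reg i)
  then show ?case by (simp add: prog_spec_return reg_def)
next
  case (Cst c)
  show ?case using prog_spec_const[of c regs] by simp
next
  case (Bin f a b)
  show ?case
    unfolding expr_prog.simps
  proof (rule prog_spec_bind[OF Bin.IH(1)], goal_cases)
    case (3 i ext)
    have "regs_below b (length (regs @ ext))" using Bin.prems by (auto intro: regs_below_mono)
    then show ?case
    proof (rule prog_spec_bind[OF Bin.IH(2)], goal_cases)
      case (2 j ext')
      then show ?case
        using prog_spec_op[OF reg_append[OF 3]] Bin.prems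
        by (auto simp: eval_expr_append elim: prog_spec_mono)
    qed simp
  qed (use Bin.prems in simp_all)
qed

fun argmax_step :: "(int \<Rightarrow> (nat \<times> nat) prog) \<Rightarrow> int \<Rightarrow> int \<times> nat \<times> nat \<Rightarrow> (int \<times> nat \<times> nat) prog" where
  "argmax_step val t (b, iv, iw) = bind_prog (val t) (\<lambda>(jv, jw).
     if_le_prog jv iv (return_prog (b, iv, iw)) (return_prog (t, jv, jw)))"

definition argmax_prog :: "(int \<Rightarrow> (nat \<times> nat) prog) \<Rightarrow> int \<Rightarrow> int \<Rightarrow> (int \<times> nat) prog" where
  "argmax_prog val t1 t2 =
     bind_prog (val t1) (\<lambda>(iv, iw).
     bind_prog (loop_prog (argmax_step val) (t1 + 1) (nat (t2 - t1)) (t1, iv, iw)) (\<lambda>(b, iv, iw).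
     return_prog (b, iw)))"

definition argmax_inv :: "real list \<Rightarrow> (int \<Rightarrow> real) \<Rightarrow> (int \<Rightarrow> real) \<Rightarrow> int \<Rightarrow> int
    \<Rightarrow> int \<times> nat \<times> nat \<Rightarrow> real list \<Rightarrow> bool" where
  "argmax_inv regs v w t1 t = (\<lambda>(b, iv, iw) regs'. prefix regs regs' \<and> t1 \<le> b \<and> b \<le> t
     \<and> (\<forall>t'. t1 \<le> t' \<and> t' \<le> t \<longrightarrow> v t' \<le> v b) \<and> reg regs' iv (v b) \<and> reg regs' iw (w b))"

lemma prog_spec_argmax_step:
  assumes val: "prog_spec (val t) regs' (\<lambda>(jv, jw) regs''. reg regs'' jv (v t) \<and> reg regs'' jw (w t)) c"
    and inv: "argmax_inv regs v w t1 (t - 1) s regs'"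
  shows "prog_spec (argmax_step val t s) regs' (argmax_inv regs v w t1 t) (c + 1)"
proof -
  obtain b iv iw where s: "s = (b, iv, iw)" by (cases s)
  from val show ?thesis
    unfolding s argmax_step.simps
  proof (rule prog_spec_bind, goal_cases)
    case (2 r ext)
    obtain jv jw where r: "r = (jv, jw)" by (cases r)
    have new: "(regs' @ ext) ! jv = v t" "reg (regs' @ ext) jv (v t)" "reg (regs' @ ext) jw (w t)"
      using 2 unfolding r by (auto simp: reg_def)
    have old: "(regs' @ ext) ! iv = v b"
      using inv unfolding argmax_inv_def s by (auto simp: reg_def nth_append_left)
    show ?case
      unfolding r case_prod_conv
    proof (rule prog_spec_if_le, goal_cases)
      case 2
      then have "v t' \<le> v b" if "t1 \<le> t'" "t' \<le> t" for t'
        using that inv new old unfolding argmax_inv_def s by (cases "t' = t") auto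
      then show ?case using inv unfolding argmax_inv_def s by (auto intro!: prog_spec_return)
    next
      case 3
      then have "v t' \<le> v t" if "t1 \<le> t'" "t' \<le> t" for t'
        using that inv new old unfolding argmax_inv_def s by (cases "t' = t") force+
      then show ?case using inv new unfolding argmax_inv_def s by (auto intro!: prog_spec_return)
    qed simp
  qed simp
qed

lemma prog_spec_argmax:
  fixes v w :: "int \<Rightarrow> real"
  assumes "t1 \<le> t2"
    and val: "\<And>t regs'. t1 \<le> t \<Longrightarrow> t \<le> t2 \<Longrightarrow> prefix regs regs' \<Longrightarrow>
      prog_spec (val t) regs' (\<lambda>(iv, iw) regs''. reg regs'' iv (v t) \<and> reg regs'' iw (w t)) c"
  shows "prog_spec (argmax_prog val t1 t2) regs
    (\<lambda>(b, iw) regs'. is_arg_max v (\<lambda>t. t1 \<le> t \<and> t \<le> t2) b \<and> reg regs' iw (w b)) (nat (t2 - t1 + 1) * (c + 1))"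
proof -
  let ?I = "\<lambda>t. argmax_inv regs v w t1 (t - 1)"
  have loop: "prog_spec (loop_prog (argmax_step val) (t1 + 1) (nat (t2 - t1)) s) regs'
      (argmax_inv regs v w t1 t2) (nat (t2 - t1) * (c + 1))"
    if "argmax_inv regs v w t1 t1 s regs'" for s regs'
  proof -
    have "prog_spec (loop_prog (argmax_step val) (t1 + 1) (nat (t2 - t1)) s) regs'
        (?I (t1 + 1 + int (nat (t2 - t1)))) (nat (t2 - t1) * (c + 1))"
    proof (rule prog_spec_loop)
      fix t s regs'' assume t: "t1 + 1 \<le> t" "t < t1 + 1 + int (nat (t2 - t1))" and inv: "?I t s regs''"
      have "prefix regs regs''" using inv by (cases s) (simp add: argmax_inv_def)
      then have "prog_spec (argmax_step val t s) regs'' (argmax_inv regs v w t1 t) (c + 1)"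
        by (intro prog_spec_argmax_step[OF _ inv] val) (use t assms(1) in auto)
      then show "prog_spec (argmax_step val t s) regs'' (?I (t + 1)) (c + 1)" by simp
    qed (use that in simp)
    then show ?thesis using assms(1) by simp
  qed
  have "prog_spec (val t1) regs (\<lambda>(iv, iw) regs''. reg regs'' iv (v t1) \<and> reg regs'' iw (w t1)) c"
    using assms(1) by (intro val) auto
  then show ?thesis
    unfolding argmax_prog_def
  proof (rule prog_spec_bind, goal_cases)
    case (2 r ext)
    obtain iv iw where r: "r = (iv, iw)" by (cases r)
    have "argmax_inv regs v w t1 t1 (t1, iv, iw) (regs @ ext)"
      using 2 unfolding r argmax_inv_def by auto
    then show ?case
      unfolding r case_prod_conv
    proof (rule prog_spec_bind[OF loop], goal_cases)
      case (2 s ext')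
      then show ?case by (cases s) (auto simp: argmax_inv_def is_arg_max_linorder intro!: prog_spec_return)
    qed (use assms(1) in \<open>simp add: nat_add_distrib\<close>)
  qed (use assms(1) in \<open>simp add: nat_add_distrib\<close>)
qed

section \<open>Optimal subsets and prefix sums of increments\<close>

definition pos_incr :: "(int \<Rightarrow> real) \<Rightarrow> int \<Rightarrow> real" where
  "pos_incr y l = max 0 (y l - y (l - 1))"

definition incr_sum :: "(int \<Rightarrow> real) \<Rightarrow> int \<Rightarrow> real" where
  "incr_sum y j = (\<Sum>l\<in>{2..j}. pos_incr y l)"

definition weighted_incr_sum :: "(int \<Rightarrow> real) \<Rightarrow> int \<Rightarrow> real" where
  "weighted_incr_sum y j = (\<Sum>l\<in>{2..j}. of_int l * pos_incr y l)"

definition incr_set :: "(int \<Rightarrow> real) \<Rightarrow> int \<Rightarrow> int set" where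
  "incr_set y T = {l \<in> {2..T}. y (l - 1) < y l}"

definition opt_set :: "int set \<Rightarrow> int \<Rightarrow> int \<Rightarrow> int \<Rightarrow> int set" where
  "opt_set D lo K t = {s \<in> {lo..min K (t - 2)}. t - s \<in> D}"

(* {opt_set_low lo K t<..t - lo} = {t - s | s. s \<in> {lo..min K (t - 2)}}; both bounds coincide when
   this range is empty. *)
definition opt_set_low :: "int \<Rightarrow> int \<Rightarrow> int \<Rightarrow> int" where
  "opt_set_low lo K t = t - max lo (min K (t - 2) + 1)"

lemma sum_from_2_step:
  fixes f :: "int \<Rightarrow> 'a::comm_monoid_add"
  assumes "2 \<le> j"
  shows "(\<Sum>l\<in>{2..j}. f l) = (\<Sum>l\<in>{2..j - 1}. f l) + f j"
proof -
  have "{2..j} = insert j {2..j - 1}" using assms by auto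
  then show ?thesis by (simp add: add.commute)
qed

lemma sum_greaterThanAtMost_from_2:
  fixes f :: "int \<Rightarrow> 'a::ab_group_add"
  assumes "1 \<le> m" "m \<le> h"
  shows "(\<Sum>l\<in>{m<..h}. f l) = (\<Sum>l\<in>{2..h}. f l) - (\<Sum>l\<in>{2..m}. f l)"
proof -
  have "{2..h} = {2..m} \<union> {m<..h}" using assms by auto
  then have "(\<Sum>l\<in>{2..h}. f l) = (\<Sum>l\<in>{2..m}. f l) + (\<Sum>l\<in>{m<..h}. f l)"
    by (simp add: sum.union_disjoint ivl_disj_int)
  then show ?thesis by simp
qed

lemma incr_sum_step: "2 \<le> j \<Longrightarrow> incr_sum y j = incr_sum y (j - 1) + pos_incr y j"
  unfolding incr_sum_def by (rule sum_from_2_step)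

lemma weighted_incr_sum_step:
  "2 \<le> j \<Longrightarrow> weighted_incr_sum y j = weighted_incr_sum y (j - 1) + of_int j * pos_incr y j"
  unfolding weighted_incr_sum_def by (rule sum_from_2_step)

lemma incr_set_step:
  assumes "2 \<le> j"
  shows "incr_set y j = (if y (j - 1) < y j then insert j (incr_set y (j - 1)) else incr_set y (j - 1))"
proof -
  have "{2..j} = insert j {2..j - 1}" using assms by auto
  then show ?thesis unfolding incr_set_def by auto
qed

lemma bsum_opt_set:
  assumes "t \<le> T" "0 \<le> lo"
  shows "bsum Cb Vb V y (opt_set (incr_set y T) lo K t) t
    = (\<Sum>s\<in>{lo..min K (t - 2)}. (Cb - Vb - of_int s * V) * pos_incr y (t - s))"
proof -
  let ?w = "\<lambda>s. Cb - Vb - of_int s * V"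
  have "bsum Cb Vb V y (opt_set (incr_set y T) lo K t) t = (\<Sum>s\<in>{lo..min K (t - 2)}.
      if t - s \<in> incr_set y T then ?w s * (y (t - s) - y (t - s - 1)) else 0)"
    unfolding bsum_def opt_set_def by (rule sum.inter_filter) simp
  also have "\<dots> = (\<Sum>s\<in>{lo..min K (t - 2)}. ?w s * pos_incr y (t - s))"
  proof (rule sum.cong[OF refl])
    fix s assume "s \<in> {lo..min K (t - 2)}"
    then have "t - s \<in> {2..T}" using assms by auto
    then show "(if t - s \<in> incr_set y T then ?w s * (y (t - s) - y (t - s - 1)) else 0)
        = ?w s * pos_incr y (t - s)"
      by (auto simp: incr_set_def pos_incr_def)
  qed
  finally show ?thesis .
qed

lemma bsum_le_opt_set:
  assumes V: "0 < V" and K: "K \<le> sigma Cb Vb V"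
    and S: "S \<subseteq> {lo..K}" "\<forall>s\<in>S. s + 2 \<le> t" and "t \<le> T" "0 \<le> lo"
  shows "bsum Cb Vb V y S t \<le> bsum Cb Vb V y (opt_set (incr_set y T) lo K t) t"
proof -
  let ?w = "\<lambda>s. Cb - Vb - of_int s * V"
  have w: "0 \<le> ?w s" if "s \<le> K" for s
  proof -
    have "of_int s \<le> (Cb - Vb) / V" using that K by (simp add: sigma_def le_floor_iff)
    then show ?thesis using V by (simp add: le_divide_eq)
  qed
  have "bsum Cb Vb V y S t \<le> (\<Sum>s\<in>S. ?w s * pos_incr y (t - s))"
    unfolding bsum_def using S w by (intro sum_mono mult_left_mono) (auto simp: pos_incr_def)
  also have "\<dots> \<le> (\<Sum>s\<in>{lo..min K (t - 2)}. ?w s * pos_incr y (t - s))"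
  proof (rule sum_mono2)
    show "S \<subseteq> {lo..min K (t - 2)}" using S by force
  qed (auto intro!: mult_nonneg_nonneg w simp: pos_incr_def)
  also have "\<dots> = bsum Cb Vb V y (opt_set (incr_set y T) lo K t) t"
    using assms by (simp add: bsum_opt_set)
  finally show ?thesis .
qed

lemma bsum_opt_set_prefix_sums:
  assumes "t \<le> T" "0 \<le> lo"
  shows "bsum Cb Vb V y (opt_set (incr_set y T) lo K t) t
    = (Cb - Vb - of_int t * V) * (incr_sum y (t - lo) - incr_sum y (opt_set_low lo K t))
      + V * (weighted_incr_sum y (t - lo) - weighted_incr_sum y (opt_set_low lo K t))"
proof (cases "min K (t - 2) < lo")
  case True
  then show ?thesis using assms by (simp add: bsum_opt_set opt_set_low_def)
next
  case False
  let ?lw = "opt_set_low lo K t"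
  have lw: "?lw = t - min K (t - 2) - 1" "1 \<le> ?lw" "?lw \<le> t - lo"
    using False unfolding opt_set_low_def by auto
  have "bsum Cb Vb V y (opt_set (incr_set y T) lo K t) t
      = (\<Sum>s\<in>{lo..min K (t - 2)}. (Cb - Vb - of_int s * V) * pos_incr y (t - s))"
    using assms by (rule bsum_opt_set)
  also have "\<dots> = (\<Sum>l\<in>{?lw<..t - lo}. (Cb - Vb - of_int (t - l) * V) * pos_incr y l)"
    by (rule sum.reindex_bij_witness[of _ "\<lambda>l. t - l" "\<lambda>s. t - s"]) (auto simp: lw(1))
  also have "\<dots> = (Cb - Vb - of_int t * V) * (\<Sum>l\<in>{?lw<..t - lo}. pos_incr y l)
      + V * (\<Sum>l\<in>{?lw<..t - lo}. of_int l * pos_incr y l)"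
    by (simp add: sum_distrib_left sum.distrib[symmetric] algebra_simps)
  also have "\<dots> = (Cb - Vb - of_int t * V) * (incr_sum y (t - lo) - incr_sum y ?lw)
      + V * (weighted_incr_sum y (t - lo) - weighted_incr_sum y ?lw)"
    unfolding incr_sum_def weighted_incr_sum_def using lw(2,3) by (simp add: sum_greaterThanAtMost_from_2)
  finally show ?thesis .
qed

section \<open>The generic family\<close>

definition Fgen :: "int \<Rightarrow> int \<Rightarrow> int \<Rightarrow> int \<Rightarrow> int \<Rightarrow> real \<Rightarrow> real \<Rightarrow> real \<Rightarrow> ineq set" where
  "Fgen lo M Le t1 t2 Cb Vb V = {(S, t, \<eta>). S \<subseteq> {lo..min M (sigma Cb Vb V)}
     \<and> 0 \<le> \<eta> \<and> \<eta> \<le> min (real_of_int Le) ((Cb - Vb) / V)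
     \<and> t1 \<le> t \<and> t \<le> t2 \<and> (\<forall>s\<in>S. s + 2 \<le> t)}"

fun violgen :: "real \<Rightarrow> int \<Rightarrow> int \<Rightarrow> int \<Rightarrow> real \<Rightarrow> real \<Rightarrow> real \<Rightarrow> (int \<Rightarrow> real) \<Rightarrow> (int \<Rightarrow> real)
    \<Rightarrow> ineq \<Rightarrow> real" where
  "violgen P e f g Cb Vb V x y (S, t, \<eta>) =
     x t - (P * y t + (Cb - P) * y (t + e)) + \<eta> * (V * (y (t + f) - y (t + g))) + bsum Cb Vb V y S t"

definition opt_eta :: "real \<Rightarrow> real \<Rightarrow> real" where
  "opt_eta E B = (if B \<le> 0 then 0 else E)"

lemma mult_le_opt_eta: "0 \<le> \<eta> \<Longrightarrow> \<eta> \<le> E \<Longrightarrow> \<eta> * B \<le> opt_eta E B * B"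
  by (auto simp: opt_eta_def mult_nonneg_nonpos mult_right_mono)

lemma is_arg_max_Fgen:
  fixes P Cb Vb V :: real and x y :: "int \<Rightarrow> real" and T M Le f g :: int
  defines "D \<equiv> incr_set y T" and "K \<equiv> min M (sigma Cb Vb V)" and "E \<equiv> min (of_int Le) ((Cb - Vb) / V)"
    and "\<eta> \<equiv> \<lambda>t. opt_eta (min (of_int Le) ((Cb - Vb) / V)) (V * (y (t + f) - y (t + g)))"
  assumes V: "0 < V" "V \<le> Cb - Vb" and "0 \<le> lo" "0 \<le> Le" and "t2 \<le> T"
    and b: "is_arg_max (\<lambda>t. violgen P e f g Cb Vb V x y (opt_set D lo K t, t, \<eta> t)) (\<lambda>t. t1 \<le> t \<and> t \<le> t2) b"
  shows "is_arg_max (violgen P e f g Cb Vb V x y) (\<lambda>q. q \<in> Fgen lo M Le t1 t2 Cb Vb V) (opt_set D lo K b, b, \<eta> b)"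
  unfolding is_arg_max_linorder
proof (intro conjI allI impI)
  have "0 \<le> E" using assms(5-8) unfolding E_def by simp
  then show "(opt_set D lo K b, b, \<eta> b) \<in> Fgen lo M Le t1 t2 Cb Vb V"
    using b unfolding Fgen_def opt_set_def is_arg_max_linorder \<eta>_def opt_eta_def K_def E_def by auto
  fix q assume q: "q \<in> Fgen lo M Le t1 t2 Cb Vb V"
  obtain S t \<eta>' where qt: "q = (S, t, \<eta>')" by (cases q)
  have t: "t1 \<le> t" "t \<le> t2" and S: "S \<subseteq> {lo..K}" "\<forall>s\<in>S. s + 2 \<le> t" and \<eta>': "0 \<le> \<eta>'" "\<eta>' \<le> E"
    using q unfolding qt Fgen_def K_def E_def by auto
  have "bsum Cb Vb V y S t \<le> bsum Cb Vb V y (opt_set D lo K t) t"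
    unfolding D_def using bsum_le_opt_set[OF V(1) _ S] t assms(7,9) by (simp add: K_def)
  moreover have "\<eta>' * (V * (y (t + f) - y (t + g))) \<le> \<eta> t * (V * (y (t + f) - y (t + g)))"
    unfolding \<eta>_def using \<eta>' unfolding E_def by (rule mult_le_opt_eta)
  ultimately have "violgen P e f g Cb Vb V x y q \<le> violgen P e f g Cb Vb V x y (opt_set D lo K t, t, \<eta> t)"
    unfolding qt by simp
  also have "\<dots> \<le> violgen P e f g Cb Vb V x y (opt_set D lo K b, b, \<eta> b)"
    using b t unfolding is_arg_max_linorder by blast
  finally show "violgen P e f g Cb Vb V x y q \<le> violgen P e f g Cb Vb V x y (opt_set D lo K b, b, \<eta> b)" .
qed

definition floor_min_prog :: "nat \<Rightarrow> int \<Rightarrow> int prog" where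
  "floor_min_prog iq M = loop_prog (\<lambda>j K. bind_prog (const_prog (of_int j)) (\<lambda>ij.
     if_le_prog ij iq (return_prog j) (return_prog K))) 1 (nat M) (min M 0)"

lemma prog_spec_floor_min:
  assumes "reg regs iq q" "0 \<le> q"
  shows "prog_spec (floor_min_prog iq M) regs (\<lambda>K _. K = min M \<lfloor>q\<rfloor>) (2 * nat M)"
proof -
  have q: "0 \<le> \<lfloor>q\<rfloor>" using assms(2) by simp
  define I where "I j = (\<lambda>K regs'. reg regs' iq q \<and> K = min M (min (j - 1) \<lfloor>q\<rfloor>))" for j
  have step: "prog_spec (bind_prog (const_prog (of_int j)) (\<lambda>ij.
      if_le_prog ij iq (return_prog j) (return_prog K))) regs' (I (j + 1)) 2"
    if j: "1 \<le> j" "j < 1 + int (nat M)" and inv: "I j K regs'" for j K regs'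
  proof (rule prog_spec_bind[OF prog_spec_const], goal_cases)
    case (2 ij ext)
    have "reg (regs' @ ext) iq q" using inv unfolding I_def by simp
    then have cmp: "(regs' @ ext) ! ij \<le> (regs' @ ext) ! iq \<longleftrightarrow> j \<le> \<lfloor>q\<rfloor>"
      using 2 by (simp add: reg_def le_floor_iff)
    show ?case
      by (rule prog_spec_if_le)
        (use inv j cmp in \<open>auto simp: I_def intro!: prog_spec_return split: if_splits\<close>)
  qed simp
  have "I 1 (min M 0) regs" using assms unfolding I_def by simp
  from prog_spec_loop[where I=I, OF step this] show ?thesis
    unfolding floor_min_prog_def
    by (rule prog_spec_mono) (use q in \<open>auto simp: I_def simp del: zero_le_floor\<close>)
qed

fun prefix_sums_step :: "(int \<Rightarrow> nat) \<Rightarrow> int \<Rightarrow> int set \<times> (int \<Rightarrow> nat) \<times> (int \<Rightarrow> nat)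
    \<Rightarrow> (int set \<times> (int \<Rightarrow> nat) \<times> (int \<Rightarrow> nat)) prog" where
  "prefix_sums_step yr j (D, Pm, Qm) =
     if_le_prog (yr j) (yr (j - 1))
       (return_prog (D, Pm(j := Pm (j - 1)), Qm(j := Qm (j - 1))))
       (bind_prog (expr_prog (Bin Add (Reg (Pm (j - 1))) (Bin Sub (Reg (yr j)) (Reg (yr (j - 1)))))) (\<lambda>ip.
        bind_prog (expr_prog (Bin Add (Reg (Qm (j - 1)))
          (Bin Mul (Cst (of_int j)) (Bin Sub (Reg (yr j)) (Reg (yr (j - 1))))))) (\<lambda>iq.
        return_prog (insert j D, Pm(j := ip), Qm(j := iq)))))"

definition prefix_sums_prog :: "(int \<Rightarrow> nat) \<Rightarrow> nat \<Rightarrow> int \<Rightarrow> (int set \<times> (int \<Rightarrow> nat) \<times> (int \<Rightarrow> nat)) prog" where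
  "prefix_sums_prog yr z T = loop_prog (prefix_sums_step yr) 2 (nat (T - 1)) ({}, \<lambda>_. z, \<lambda>_. z)"

definition prefix_sums_inv :: "real list \<Rightarrow> (int \<Rightarrow> real) \<Rightarrow> int
    \<Rightarrow> int set \<times> (int \<Rightarrow> nat) \<times> (int \<Rightarrow> nat) \<Rightarrow> real list \<Rightarrow> bool" where
  "prefix_sums_inv regs y j = (\<lambda>(D, Pm, Qm) regs'. prefix regs regs' \<and> D = incr_set y j
     \<and> (\<forall>i \<le> j. reg regs' (Pm i) (incr_sum y i) \<and> reg regs' (Qm i) (weighted_incr_sum y i)))"

lemma prog_spec_prefix_sums_step:
  assumes j: "2 \<le> j" and yj: "reg regs' (yr j) (y j)" "reg regs' (yr (j - 1)) (y (j - 1))"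
    and inv: "prefix_sums_inv regs y (j - 1) s regs'"
  shows "prog_spec (prefix_sums_step yr j s) regs' (prefix_sums_inv regs y j) 7"
proof -
  obtain D Pm Qm where s: "s = (D, Pm, Qm)" by (cases s)
  have pre: "prefix regs regs'" and D: "D = incr_set y (j - 1)"
    and sums: "\<forall>i \<le> j - 1. reg regs' (Pm i) (incr_sum y i) \<and> reg regs' (Qm i) (weighted_incr_sum y i)"
    using inv unfolding prefix_sums_inv_def s by auto
  have P: "reg regs' (Pm (j - 1)) (incr_sum y (j - 1))" "reg regs' (Qm (j - 1)) (weighted_incr_sum y (j - 1))"
    using sums by auto
  show ?thesis
    unfolding s prefix_sums_step.simps
  proof (rule prog_spec_if_le, goal_cases)
    case 2
    then have "y j \<le> y (j - 1)" using yj by (simp add: reg_def)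
    then have "incr_sum y j = incr_sum y (j - 1)" "weighted_incr_sum y j = weighted_incr_sum y (j - 1)"
      and "incr_set y j = incr_set y (j - 1)"
      using j by (auto simp: incr_sum_step weighted_incr_sum_step pos_incr_def incr_set_step)
    then show ?case using pre D sums P unfolding prefix_sums_inv_def by (auto intro!: prog_spec_return)
  next
    case 3
    then have "y (j - 1) < y j" using yj by (simp add: reg_def)
    then have incr: "incr_sum y j = incr_sum y (j - 1) + (y j - y (j - 1))"
      "weighted_incr_sum y j = weighted_incr_sum y (j - 1) + of_int j * (y j - y (j - 1))"
      and Dj: "incr_set y j = insert j (incr_set y (j - 1))"
      using j by (auto simp: incr_sum_step weighted_incr_sum_step pos_incr_def incr_set_step)
    show ?case
    proof (rule prog_spec_bind[OF prog_spec_expr], goal_cases)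
      case (3 ip ext)
      then have ip: "reg (regs' @ ext) ip (incr_sum y j)"
        using yj P incr by (simp add: reg_def)
      show ?case
      proof (rule prog_spec_bind[OF prog_spec_expr], goal_cases)
        case (3 iq ext')
        then have "reg ((regs' @ ext) @ ext') iq (weighted_incr_sum y j)"
          using reg_append[OF yj(1)] reg_append[OF yj(2)] reg_append[OF P(2)] incr
          by (simp add: reg_def algebra_simps)
        then show ?case
          using pre D sums reg_append[OF ip] Dj unfolding prefix_sums_inv_def by (auto intro!: prog_spec_return)
      qed (use yj P in \<open>auto simp: reg_def\<close>)
    qed (use yj P in \<open>auto simp: reg_def\<close>)
  qed simp
qed

lemma prog_spec_prefix_sums:
  assumes z: "reg regs z 0" and y: "\<And>l. 1 \<le> l \<Longrightarrow> l \<le> T \<Longrightarrow> reg regs (yr l) (y l)" and T: "1 \<le> T"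
  shows "prog_spec (prefix_sums_prog yr z T) regs (prefix_sums_inv regs y T) (7 * nat (T - 1))"
proof -
  let ?I = "\<lambda>j. prefix_sums_inv regs y (j - 1)"
  have "prog_spec (prefix_sums_prog yr z T) regs (?I (2 + int (nat (T - 1)))) (nat (T - 1) * 7)"
    unfolding prefix_sums_prog_def
  proof (rule prog_spec_loop)
    fix j s regs' assume j: "2 \<le> j" "j < 2 + int (nat (T - 1))" and inv: "?I j s regs'"
    have "prefix regs regs'" using inv by (cases s) (simp add: prefix_sums_inv_def)
    then have "reg regs' (yr j) (y j)" "reg regs' (yr (j - 1)) (y (j - 1))"
      using y[of j] y[of "j - 1"] j T reg_prefix by auto
    then show "prog_spec (prefix_sums_step yr j s) regs' (?I (j + 1)) 7"
      using prog_spec_prefix_sums_step[OF j(1) _ _ inv] by simp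
  next
    show "?I 2 ({}, \<lambda>_. z, \<lambda>_. z) regs"
      using z unfolding prefix_sums_inv_def incr_set_def incr_sum_def weighted_incr_sum_def by auto
  qed
  then show ?thesis using T by (simp add: mult.commute)
qed

definition eta_bound_prog :: "int \<Rightarrow> (nat \<times> nat) prog" where
  "eta_bound_prog Le =
     bind_prog (expr_prog (Bin Div (Bin Sub (Reg 0) (Reg 3)) (Reg 2))) (\<lambda>iq.
     bind_prog (const_prog (of_int Le)) (\<lambda>iL.
     if_le_prog iL iq (return_prog (iq, iL)) (return_prog (iq, iq))))"

lemma prog_spec_eta_bound:
  assumes "reg regs 0 Cb" "reg regs 2 V" "reg regs 3 Vb"
  shows "prog_spec (eta_bound_prog Le) regs (\<lambda>(iq, iE) regs'.
    reg regs' iq ((Cb - Vb) / V) \<and> reg regs' iE (min (of_int Le) ((Cb - Vb) / V))) 4"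
  unfolding eta_bound_prog_def
proof (rule prog_spec_bind[OF prog_spec_expr], goal_cases)
  case (3 iq ext)
  have iq: "reg (regs @ ext) iq ((Cb - Vb) / V)" using 3 assms by (simp add: reg_def)
  show ?case
  proof (rule prog_spec_bind[OF prog_spec_const], goal_cases)
    case (2 iL ext')
    show ?case
      by (rule prog_spec_if_le)
        (use 2 reg_append[OF iq] in \<open>auto simp: reg_def min_def intro!: prog_spec_return\<close>)
  qed simp
qed (use assms in \<open>auto simp: reg_def\<close>)

definition preprocess_prog :: "(int \<Rightarrow> nat) \<Rightarrow> int \<Rightarrow> int \<Rightarrow> int
    \<Rightarrow> (nat \<times> nat \<times> int \<times> int set \<times> (int \<Rightarrow> nat) \<times> (int \<Rightarrow> nat)) prog" where
  "preprocess_prog yr M Le T =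
     bind_prog (const_prog 0) (\<lambda>z.
     bind_prog (eta_bound_prog Le) (\<lambda>(iq, iE).
     bind_prog (floor_min_prog iq M) (\<lambda>K.
     bind_prog (prefix_sums_prog yr z T) (\<lambda>(D, Pm, Qm).
     return_prog (z, iE, K, D, Pm, Qm)))))"

lemma prog_spec_preprocess:
  assumes regs: "reg regs 0 Cb" "reg regs 2 V" "reg regs 3 Vb"
    and y: "\<And>l. 1 \<le> l \<Longrightarrow> l \<le> T \<Longrightarrow> reg regs (yr l) (y l)"
    and V: "0 < V" "V \<le> Cb - Vb" and T: "1 \<le> T"
  shows "prog_spec (preprocess_prog yr M Le T) regs (\<lambda>(z, iE, K, D, Pm, Qm) regs'. reg regs' z 0
      \<and> reg regs' iE (min (of_int Le) ((Cb - Vb) / V)) \<and> K = min M (sigma Cb Vb V)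
      \<and> prefix_sums_inv regs y T (D, Pm, Qm) regs')
    (5 + 2 * nat M + 7 * nat (T - 1))"
  unfolding preprocess_prog_def
proof (rule prog_spec_bind[OF prog_spec_const], goal_cases)
  case (2 z ext1)
  note z = this
  have "prog_spec (eta_bound_prog Le) (regs @ ext1) (\<lambda>(iq, iE) regs'.
      reg regs' iq ((Cb - Vb) / V) \<and> reg regs' iE (min (of_int Le) ((Cb - Vb) / V))) 4"
    using regs by (intro prog_spec_eta_bound) simp_all
  then show ?case
  proof (rule prog_spec_bind, goal_cases)
    case (2 r ext2)
    obtain iq iE where r: "r = (iq, iE)" by (cases r)
    have iq: "reg ((regs @ ext1) @ ext2) iq ((Cb - Vb) / V)"
      and iE: "reg ((regs @ ext1) @ ext2) iE (min (of_int Le) ((Cb - Vb) / V))"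
      using 2 unfolding r by auto
    have "0 \<le> (Cb - Vb) / V" using V by simp
    from prog_spec_floor_min[OF iq this, of M]
    have "prog_spec (floor_min_prog iq M) ((regs @ ext1) @ ext2) (\<lambda>K _. K = min M (sigma Cb Vb V)) (2 * nat M)"
      unfolding sigma_def .
    then show ?case
      unfolding r case_prod_conv
    proof (rule prog_spec_bind, goal_cases)
      case (2 K ext3)
      note K = this
      let ?R3 = "((regs @ ext1) @ ext2) @ ext3"
      have "prog_spec (prefix_sums_prog yr z T) ?R3 (prefix_sums_inv ?R3 y T) (7 * nat (T - 1))"
        using y T reg_prefix[OF z] by (intro prog_spec_prefix_sums) simp_all
      then show ?case
      proof (rule prog_spec_bind, goal_cases)
        case (2 s ext4)
        obtain D Pm Qm where s: "s = (D, Pm, Qm)" by (cases s)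
        show ?case
          using 2 K reg_prefix[OF z] reg_prefix[OF iE] unfolding s prefix_sums_inv_def
          by (auto intro!: prog_spec_return)
      qed simp
    qed simp
  qed simp
qed simp

(* Registers 0, 2 and 3 hold Cb, V and Vb, as in input_regs. *)
definition base_expr :: "(int \<Rightarrow> nat) \<Rightarrow> (int \<Rightarrow> nat) \<Rightarrow> nat \<Rightarrow> int \<Rightarrow> int \<Rightarrow> expr" where
  "base_expr xr yr ip e t = Bin Sub (Reg (xr t))
     (Bin Add (Bin Mul (Reg ip) (Reg (yr t))) (Bin Mul (Bin Sub (Reg 0) (Reg ip)) (Reg (yr (t + e)))))"

definition opt_bsum_expr :: "int \<Rightarrow> int \<Rightarrow> (int \<Rightarrow> nat) \<Rightarrow> (int \<Rightarrow> nat) \<Rightarrow> int \<Rightarrow> expr" where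
  "opt_bsum_expr lo K Pm Qm t = Bin Add
     (Bin Mul (Bin Sub (Bin Sub (Reg 0) (Reg 3)) (Bin Mul (Cst (of_int t)) (Reg 2)))
       (Bin Sub (Reg (Pm (t - lo))) (Reg (Pm (opt_set_low lo K t)))))
     (Bin Mul (Reg 2) (Bin Sub (Reg (Qm (t - lo))) (Reg (Qm (opt_set_low lo K t)))))"

lemma eval_base_expr:
  assumes "reg regs 0 Cb" "reg regs ip P" "reg regs (xr t) (x t)" "reg regs (yr t) (y t)"
    "reg regs (yr (t + e)) (y (t + e))"
  shows "regs_below (base_expr xr yr ip e t) (length regs)"
    "eval_expr (base_expr xr yr ip e t) regs = x t - (P * y t + (Cb - P) * y (t + e))"
  using assms by (auto simp: base_expr_def reg_def)

lemma eval_opt_bsum_expr: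
  assumes "reg regs 0 Cb" "reg regs 2 V" "reg regs 3 Vb"
    and "\<forall>i \<le> T. reg regs (Pm i) (incr_sum y i) \<and> reg regs (Qm i) (weighted_incr_sum y i)"
    and "t \<le> T" "0 \<le> lo"
  shows "regs_below (opt_bsum_expr lo K Pm Qm t) (length regs)"
    "eval_expr (opt_bsum_expr lo K Pm Qm t) regs = bsum Cb Vb V y (opt_set (incr_set y T) lo K t) t"
proof -
  have "opt_set_low lo K t \<le> T" "t - lo \<le> T" using assms(5,6) unfolding opt_set_low_def by auto
  then show "regs_below (opt_bsum_expr lo K Pm Qm t) (length regs)"
    "eval_expr (opt_bsum_expr lo K Pm Qm t) regs = bsum Cb Vb V y (opt_set (incr_set y T) lo K t) t"
    using assms by (auto simp: opt_bsum_expr_def reg_def bsum_opt_set_prefix_sums)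
qed

definition candidate_prog :: "(int \<Rightarrow> nat) \<Rightarrow> (int \<Rightarrow> nat) \<Rightarrow> nat \<Rightarrow> int \<Rightarrow> int \<Rightarrow> int \<Rightarrow> int \<Rightarrow> int
    \<Rightarrow> nat \<Rightarrow> nat \<Rightarrow> (int \<Rightarrow> nat) \<Rightarrow> (int \<Rightarrow> nat) \<Rightarrow> int \<Rightarrow> (nat \<times> nat) prog" where
  "candidate_prog xr yr ip e f g lo K z iE Pm Qm t =
     bind_prog (expr_prog (Bin Mul (Reg 2) (Bin Sub (Reg (yr (t + f))) (Reg (yr (t + g)))))) (\<lambda>iB.
     bind_prog (if_le_prog iB z (return_prog z) (return_prog iE)) (\<lambda>i\<eta>.
     bind_prog (expr_prog (Bin Add (Bin Add (base_expr xr yr ip e t) (Bin Mul (Reg i\<eta>) (Reg iB)))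
       (opt_bsum_expr lo K Pm Qm t))) (\<lambda>iv.
     return_prog (iv, i\<eta>))))"

lemma prog_spec_candidate:
  fixes x y :: "int \<Rightarrow> real"
  assumes regs: "reg regs 0 Cb" "reg regs 2 V" "reg regs 3 Vb" "reg regs ip P" "reg regs z 0" "reg regs iE E"
    "reg regs (xr t) (x t)" "reg regs (yr t) (y t)" "reg regs (yr (t + e)) (y (t + e))"
    "reg regs (yr (t + f)) (y (t + f))" "reg regs (yr (t + g)) (y (t + g))"
    and sums: "\<forall>i \<le> T. reg regs (Pm i) (incr_sum y i) \<and> reg regs (Qm i) (weighted_incr_sum y i)"
    and t: "t \<le> T" "0 \<le> lo"
  defines "\<eta> \<equiv> opt_eta E (V * (y (t + f) - y (t + g)))"
  shows "prog_spec (candidate_prog xr yr ip e f g lo K z iE Pm Qm t) regs (\<lambda>(iv, i\<eta>) regs'.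
    reg regs' iv (violgen P e f g Cb Vb V x y (opt_set (incr_set y T) lo K t, t, \<eta>)) \<and> reg regs' i\<eta> \<eta>) 20"
  unfolding candidate_prog_def
proof (rule prog_spec_bind[OF prog_spec_expr], goal_cases)
  case (3 iB ext)
  let ?R = "regs @ ext"
  have iB: "reg ?R iB (V * (y (t + f) - y (t + g)))" using 3 regs by (simp add: reg_def)
  have "prog_spec (if_le_prog iB z (return_prog z) (return_prog iE)) ?R (\<lambda>i\<eta> R'. reg R' i\<eta> \<eta>) 1"
    by (rule prog_spec_if_le)
      (use iB regs(5,6) in \<open>auto simp: \<eta>_def opt_eta_def reg_def nth_append_left intro!: prog_spec_return\<close>)
  then show ?case
  proof (rule prog_spec_bind, goal_cases)
    case (2 i\<eta> ext')
    let ?R' = "?R @ ext'"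
    have "reg ?R' 0 Cb" "reg ?R' 2 V" "reg ?R' 3 Vb" "reg ?R' ip P" "reg ?R' (xr t) (x t)"
      "reg ?R' (yr t) (y t)" "reg ?R' (yr (t + e)) (y (t + e))"
      and "\<forall>i \<le> T. reg ?R' (Pm i) (incr_sum y i) \<and> reg ?R' (Qm i) (weighted_incr_sum y i)"
      using regs sums by simp_all
    note base = eval_base_expr[where xr=xr and yr=yr and e=e and t=t and x=x and y=y, OF this(1,4-7)]
      and bs = eval_opt_bsum_expr[where K=K, OF this(1-3,8) t]
    show ?case
    proof (rule prog_spec_bind[OF prog_spec_expr], goal_cases)
      case (3 iv ext'')
      then have "reg (?R' @ ext'') iv (violgen P e f g Cb Vb V x y (opt_set (incr_set y T) lo K t, t, \<eta>))"
        using base bs 2 reg_append[OF iB] by (simp add: reg_def)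
      then show ?case using reg_append[OF 2] by (auto intro!: prog_spec_return)
    qed (use base bs 2 reg_append[OF iB] in \<open>auto simp: reg_def base_expr_def opt_bsum_expr_def\<close>)
  qed simp
qed (use regs in \<open>auto simp: reg_def\<close>)

lemma prog_spec_argmax_candidate:
  fixes x y :: "int \<Rightarrow> real"
  assumes regs: "reg regs 0 Cb" "reg regs 2 V" "reg regs 3 Vb" "reg regs ip P"
      "\<And>l. 1 \<le> l \<Longrightarrow> l \<le> T \<Longrightarrow> reg regs (xr l) (x l) \<and> reg regs (yr l) (y l)"
    and z: "reg regs z 0" and iE: "reg regs iE E"
    and sums: "\<forall>i \<le> T. reg regs (Pm i) (incr_sum y i) \<and> reg regs (Qm i) (weighted_incr_sum y i)"
    and lo: "0 \<le> lo" and t: "t1 \<le> t2" and range: "\<And>t. t1 \<le> t \<Longrightarrow> t \<le> t2 \<Longrightarrow> {t, t + e, t + f, t + g} \<subseteq> {1..T}"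
  defines "\<eta> \<equiv> \<lambda>t. opt_eta E (V * (y (t + f) - y (t + g)))"
  shows "prog_spec (argmax_prog (candidate_prog xr yr ip e f g lo K z iE Pm Qm) t1 t2) regs
    (\<lambda>(b, i\<eta>) regs'. is_arg_max (\<lambda>t. violgen P e f g Cb Vb V x y (opt_set (incr_set y T) lo K t, t, \<eta> t))
       (\<lambda>t. t1 \<le> t \<and> t \<le> t2) b \<and> reg regs' i\<eta> (\<eta> b))
    (nat (t2 - t1 + 1) * (20 + 1))"
proof (rule prog_spec_argmax[OF t])
  fix t regs' assume t: "t1 \<le> t" "t \<le> t2" and pre: "prefix regs regs'"
  have "{t, t + e, t + f, t + g} \<subseteq> {1..T}" using range[OF t] .
  then show "prog_spec (candidate_prog xr yr ip e f g lo K z iE Pm Qm t) regs' (\<lambda>(iv, i\<eta>) regs''.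
      reg regs'' iv (violgen P e f g Cb Vb V x y (opt_set (incr_set y T) lo K t, t, \<eta> t))
      \<and> reg regs'' i\<eta> (\<eta> t)) 20"
    unfolding \<eta>_def
    by (intro prog_spec_candidate) (use regs z iE sums lo reg_prefix[OF _ pre] in auto)
qed

definition best_ineq_prog :: "(int \<Rightarrow> nat) \<Rightarrow> (int \<Rightarrow> nat) \<Rightarrow> nat \<Rightarrow> int \<Rightarrow> int \<Rightarrow> int \<Rightarrow> int \<Rightarrow> int
    \<Rightarrow> int \<Rightarrow> int \<Rightarrow> int \<Rightarrow> int \<Rightarrow> (int set \<times> int \<times> nat) prog" where
  "best_ineq_prog xr yr ip e f g lo M Le T t1 t2 =
     bind_prog (preprocess_prog yr M Le T) (\<lambda>(z, iE, K, D, Pm, Qm).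
     bind_prog (argmax_prog (candidate_prog xr yr ip e f g lo K z iE Pm Qm) t1 t2) (\<lambda>(b, i\<eta>).
     return_prog (opt_set D lo K b, b, i\<eta>)))"

lemma prog_spec_best_ineq:
  fixes x y :: "int \<Rightarrow> real"
  assumes regs: "reg regs 0 Cb" "reg regs 2 V" "reg regs 3 Vb" "reg regs ip P"
    and xy: "\<And>l. 1 \<le> l \<Longrightarrow> l \<le> T \<Longrightarrow> reg regs (xr l) (x l) \<and> reg regs (yr l) (y l)"
    and V: "0 < V" "V \<le> Cb - Vb" and lo: "0 \<le> lo" and Le: "0 \<le> Le" and M: "M \<le> T"
    and t: "t1 \<le> t2" and range: "\<And>t. t1 \<le> t \<Longrightarrow> t \<le> t2 \<Longrightarrow> {t, t + e, t + f, t + g} \<subseteq> {1..T}"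
  shows "prog_spec (best_ineq_prog xr yr ip e f g lo M Le T t1 t2) regs (\<lambda>(S, t, i\<eta>) regs'.
    is_arg_max (violgen P e f g Cb Vb V x y) (\<lambda>q. q \<in> Fgen lo M Le t1 t2 Cb Vb V) (S, t, regs' ! i\<eta>)) (30 * nat T)"
proof -
  have T: "1 \<le> t1" "t2 \<le> T" using range[of t1] range[of t2] t by auto
  let ?E = "min (of_int Le) ((Cb - Vb) / V)"
  have "prog_spec (preprocess_prog yr M Le T) regs (\<lambda>(z, iE, K, D, Pm, Qm) regs'. reg regs' z 0
      \<and> reg regs' iE ?E \<and> K = min M (sigma Cb Vb V) \<and> prefix_sums_inv regs y T (D, Pm, Qm) regs')
    (5 + 2 * nat M + 7 * nat (T - 1))"
    using xy T t by (intro prog_spec_preprocess regs V) auto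
  then show ?thesis
    unfolding best_ineq_prog_def
  proof (rule prog_spec_bind, goal_cases)
    case 1
    have "nat M \<le> nat T" "nat (T - 1) + 1 = nat T" using T M t by auto
    then show ?case by linarith
  next
    case (2 r ext)
    obtain z iE K D Pm Qm where r: "r = (z, iE, K, D, Pm, Qm)" by (cases r)
    let ?R = "regs @ ext"
    have z: "reg ?R z 0" and iE: "reg ?R iE ?E" and K: "K = min M (sigma Cb Vb V)"
      and D: "D = incr_set y T"
      and sums: "\<forall>i \<le> T. reg ?R (Pm i) (incr_sum y i) \<and> reg ?R (Qm i) (weighted_incr_sum y i)"
      using 2 unfolding r prefix_sums_inv_def by auto
    have "prog_spec (argmax_prog (candidate_prog xr yr ip e f g lo K z iE Pm Qm) t1 t2) ?R
      (\<lambda>(b, i\<eta>) regs'. is_arg_max (\<lambda>t. violgen P e f g Cb Vb V x y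
         (opt_set (incr_set y T) lo K t, t, opt_eta ?E (V * (y (t + f) - y (t + g))))) (\<lambda>t. t1 \<le> t \<and> t \<le> t2) b
       \<and> reg regs' i\<eta> (opt_eta ?E (V * (y (b + f) - y (b + g)))))
      (nat (t2 - t1 + 1) * (20 + 1))"
      using regs xy by (intro prog_spec_argmax_candidate z iE sums lo t range) simp_all
    then show ?case
      unfolding r case_prod_conv
    proof (rule prog_spec_bind, goal_cases)
      case (2 r' ext')
      obtain b i\<eta> where r': "r' = (b, i\<eta>)" by (cases r')
      have "is_arg_max (violgen P e f g Cb Vb V x y) (\<lambda>q. q \<in> Fgen lo M Le t1 t2 Cb Vb V)
          (opt_set (incr_set y T) lo (min M (sigma Cb Vb V)) b, b, opt_eta ?E (V * (y (b + f) - y (b + g))))"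
        using 2 V lo Le T unfolding r' K by (intro is_arg_max_Fgen) (auto simp: reg_def)
      then show ?case using 2 unfolding r' D K by (auto simp: reg_def intro!: prog_spec_return)
    qed (use t T M in \<open>auto simp: nat_mult_distrib nat_add_distrib\<close>)
  qed
qed

section \<open>The six families\<close>

lemma length_input_regs: "length (input_regs T Cb Cu V Vb x y) = 4 + 2 * nat T"
  by (simp add: input_regs_def)

lemma reg_input_regs_params: "i < 4 \<Longrightarrow> reg (input_regs T Cb Cu V Vb x y) i ([Cb, Cu, V, Vb] ! i)"
  using nth_append_left[of i "[Cb, Cu, V, Vb]" "map x [1..T] @ map y [1..T]"]
  by (simp add: reg_def input_regs_def)

lemma reg_input_regs_xy:
  assumes "1 \<le> l" "l \<le> T"
  shows "reg (input_regs T Cb Cu V Vb x y) (3 + nat l) (x l)"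
    and "reg (input_regs T Cb Cu V Vb x y) (3 + nat T + nat l) (y l)"
proof -
  define k where "k = nat (l - 1)"
  have "l = 1 + int k" "k < nat T" using assms unfolding k_def by auto
  then show "reg (input_regs T Cb Cu V Vb x y) (3 + nat l) (x l)"
    "reg (input_regs T Cb Cu V Vb x y) (3 + nat T + nat l) (y l)"
    by (auto simp: reg_def input_regs_def nth_append)
qed

(* input_regs stores x l and y l in registers 3 + nat l and 3 + nat T + nat l; the tree takes
   x (\<tau> l) and y (\<tau> l) as the data at time l, so that \<tau> can reverse time. *)
definition best_ineq_tree :: "(int \<Rightarrow> int) \<Rightarrow> nat \<Rightarrow> int \<Rightarrow> int \<Rightarrow> int \<Rightarrow> int \<Rightarrow> int \<Rightarrow> int \<Rightarrow> int
    \<Rightarrow> int \<Rightarrow> int \<Rightarrow> ctree" where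
  "best_ineq_tree \<tau> ip e f g lo M Le T t1 t2 =
     (if t1 \<le> t2 then best_ineq_prog (\<lambda>l. 3 + nat (\<tau> l)) (\<lambda>l. 3 + nat T + nat (\<tau> l)) ip e f g lo M Le T t1 t2
        (4 + 2 * nat T) (\<lambda>(S, b, i\<eta>) _. Leaf S (\<tau> b) i\<eta>)
      else Leaf {} 0 0)"

lemma run_best_ineq_tree:
  fixes x y :: "int \<Rightarrow> real"
  assumes \<tau>: "\<And>l. 1 \<le> l \<Longrightarrow> l \<le> T \<Longrightarrow> 1 \<le> \<tau> l \<and> \<tau> l \<le> T"
    and ip: "ip < 4" "[Cb, Cu, V, Vb] ! ip = P"
    and V: "0 < V" "V \<le> Cb - Vb" and lo: "0 \<le> lo" and Le: "0 \<le> Le" and M: "M \<le> T"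
    and range: "\<And>t. t1 \<le> t \<Longrightarrow> t \<le> t2 \<Longrightarrow> {t, t + e, t + f, t + g} \<subseteq> {1..T}"
  defines "r \<equiv> run (best_ineq_tree \<tau> ip e f g lo M Le T t1 t2) (input_regs T Cb Cu V Vb x y)"
  shows "snd r \<le> 30 * nat T \<and> (t1 \<le> t2 \<longrightarrow> (\<exists>S b \<eta>. fst r = (S, \<tau> b, \<eta>) \<and>
    is_arg_max (violgen P e f g Cb Vb V (x \<circ> \<tau>) (y \<circ> \<tau>)) (\<lambda>q. q \<in> Fgen lo M Le t1 t2 Cb Vb V) (S, b, \<eta>)))"
proof (cases "t1 \<le> t2")
  case False
  then show ?thesis unfolding r_def best_ineq_tree_def by simp
next
  case True
  let ?regs = "input_regs T Cb Cu V Vb x y"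
  let ?leaf = "\<lambda>(S, b, i\<eta>) _. Leaf S (\<tau> b) i\<eta>"
  have "prog_spec (best_ineq_prog (\<lambda>l. 3 + nat (\<tau> l)) (\<lambda>l. 3 + nat T + nat (\<tau> l)) ip e f g lo M Le T t1 t2) ?regs
    (\<lambda>(S, t, i\<eta>) regs'. is_arg_max (violgen P e f g Cb Vb V (x \<circ> \<tau>) (y \<circ> \<tau>))
      (\<lambda>q. q \<in> Fgen lo M Le t1 t2 Cb Vb V) (S, t, regs' ! i\<eta>)) (30 * nat T)"
  proof (rule prog_spec_best_ineq[OF _ _ _ _ _ V lo Le M True range])
    show "reg ?regs 0 Cb" "reg ?regs 2 V" "reg ?regs 3 Vb" "reg ?regs ip P"
      using reg_input_regs_params[of 0 T Cb Cu V Vb x y] reg_input_regs_params[of 2 T Cb Cu V Vb x y]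
        reg_input_regs_params[of 3 T Cb Cu V Vb x y] reg_input_regs_params[of ip T Cb Cu V Vb x y] ip
      by simp_all
  qed (use \<tau> reg_input_regs_xy in auto)
  then obtain a ext c where c: "c \<le> 30 * nat T"
    and opt: "(\<lambda>(S, t, i\<eta>) regs'. is_arg_max (violgen P e f g Cb Vb V (x \<circ> \<tau>) (y \<circ> \<tau>))
      (\<lambda>q. q \<in> Fgen lo M Le t1 t2 Cb Vb V) (S, t, regs' ! i\<eta>)) a (?regs @ ext)"
    and run: "run (best_ineq_prog (\<lambda>l. 3 + nat (\<tau> l)) (\<lambda>l. 3 + nat T + nat (\<tau> l)) ip e f g lo M Le T t1 t2
      (length ?regs) ?leaf) ?regs = add_cost c (run (?leaf a (length (?regs @ ext))) (?regs @ ext))"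
    unfolding prog_spec_def by blast
  obtain S b i\<eta> where "a = (S, b, i\<eta>)" by (cases a)
  then show ?thesis
    using True c opt run unfolding r_def best_ineq_tree_def length_input_regs by (auto simp: add_cost_def)
qed

lemma is_arg_max_image:
  fixes f :: "'b \<Rightarrow> 'c::linorder"
  shows "is_arg_max (f \<circ> h) (\<lambda>x. x \<in> A) a \<Longrightarrow> is_arg_max f (\<lambda>y. y \<in> h ` A) (h a)"
  unfolding is_arg_max_linorder by auto

(* The nonnegativity of the point and the value of Cu are not needed. *)
lemma most_violated_linear_time_Fgen:
  fixes \<tau> :: "int \<Rightarrow> int \<Rightarrow> int" and P :: "real \<Rightarrow> real \<Rightarrow> real"
    and M :: "int \<Rightarrow> int \<Rightarrow> int" and Le tmin tmax :: "int \<Rightarrow> int"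
  assumes fam: "\<And>T L Cb Vb V. 1 \<le> T \<Longrightarrow> 1 \<le> L \<Longrightarrow> 0 < V \<Longrightarrow> V \<le> Cb - Vb \<Longrightarrow>
      fam T L Cb Vb V = (\<lambda>(S, t, \<eta>). (S, \<tau> T t, \<eta>)) ` Fgen lo (M T L) (Le L) (tmin T) (tmax T) Cb Vb V"
    and viol: "\<And>T Cb Vb V x y S t \<eta>. viol Cb Vb V x y (S, \<tau> T t, \<eta>)
      = violgen (P Cb Vb) e f g Cb Vb V (x \<circ> \<tau> T) (y \<circ> \<tau> T) (S, t, \<eta>)"
    and \<tau>: "\<And>T l. 1 \<le> l \<Longrightarrow> l \<le> T \<Longrightarrow> 1 \<le> \<tau> T l \<and> \<tau> T l \<le> T"
    and ip: "ip < 4" "\<And>Cb Cu V Vb. [Cb, Cu, V, Vb] ! ip = P Cb Vb"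
    and Le: "\<And>L. 1 \<le> L \<Longrightarrow> 0 \<le> Le L" and lo: "0 \<le> lo" and M: "\<And>T L. M T L \<le> T"
    and range: "\<And>T t. tmin T \<le> t \<Longrightarrow> t \<le> tmax T \<Longrightarrow> {t, t + e, t + f, t + g} \<subseteq> {1..T}"
  shows "most_violated_linear_time fam viol"
  unfolding most_violated_linear_time_def Let_def
proof (intro exI[of _ 30] allI impI)
  fix T L :: int assume T: "1 \<le> T" and L: "1 \<le> L"
  let ?tr = "best_ineq_tree (\<tau> T) ip e f g lo (M T L) (Le L) T (tmin T) (tmax T)"
  show "\<exists>tr. \<forall>Cb Cu V Vb x y. std_params T L Cb Cu V Vb \<and> (\<forall>t\<in>{1..T}. 0 \<le> x t \<and> 0 \<le> y t) \<longrightarrow>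
    snd (run tr (input_regs T Cb Cu V Vb x y)) \<le> 30 * nat T
    \<and> ((\<exists>q'\<in>fam T L Cb Vb V. 0 < viol Cb Vb V x y q') \<longrightarrow>
      fst (run tr (input_regs T Cb Cu V Vb x y)) \<in> fam T L Cb Vb V
      \<and> (\<forall>q'\<in>fam T L Cb Vb V.
        viol Cb Vb V x y q' \<le> viol Cb Vb V x y (fst (run tr (input_regs T Cb Cu V Vb x y)))))"
  proof (intro exI[of _ ?tr] allI impI conjI)
    fix Cb Cu V Vb :: real and x y :: "int \<Rightarrow> real"
    assume "std_params T L Cb Cu V Vb \<and> (\<forall>t\<in>{1..T}. 0 \<le> x t \<and> 0 \<le> y t)"
    then have V: "0 < V" "V \<le> Cb - Vb" unfolding std_params_def by auto
    let ?r = "run ?tr (input_regs T Cb Cu V Vb x y)"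
    let ?h = "\<lambda>(S, t, \<eta>). (S, \<tau> T t, \<eta>)"
    have r: "snd ?r \<le> 30 * nat T \<and> (tmin T \<le> tmax T \<longrightarrow> (\<exists>S b \<eta>. fst ?r = (S, \<tau> T b, \<eta>) \<and>
      is_arg_max (violgen (P Cb Vb) e f g Cb Vb V (x \<circ> \<tau> T) (y \<circ> \<tau> T))
        (\<lambda>q. q \<in> Fgen lo (M T L) (Le L) (tmin T) (tmax T) Cb Vb V) (S, b, \<eta>)))"
      by (rule run_best_ineq_tree) (use \<tau> ip V Le[OF L] lo M range in auto)
    then show "snd ?r \<le> 30 * nat T" by simp
    assume "\<exists>q'\<in>fam T L Cb Vb V. 0 < viol Cb Vb V x y q'"
    then have "tmin T \<le> tmax T" unfolding fam[OF T L V] Fgen_def by auto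
    moreover have "viol Cb Vb V x y \<circ> ?h = violgen (P Cb Vb) e f g Cb Vb V (x \<circ> \<tau> T) (y \<circ> \<tau> T)"
      by (simp add: fun_eq_iff viol split_beta)
    ultimately obtain S b \<eta> where q: "fst ?r = ?h (S, b, \<eta>)"
      and opt: "is_arg_max (viol Cb Vb V x y \<circ> ?h)
        (\<lambda>q. q \<in> Fgen lo (M T L) (Le L) (tmin T) (tmax T) Cb Vb V) (S, b, \<eta>)"
      using r by auto
    have "is_arg_max (viol Cb Vb V x y) (\<lambda>q. q \<in> fam T L Cb Vb V) (fst ?r)"
      unfolding q fam[OF T L V] by (rule is_arg_max_image[OF opt])
    then show "fst ?r \<in> fam T L Cb Vb V"
      and "\<forall>q'\<in>fam T L Cb Vb V. viol Cb Vb V x y q' \<le> viol Cb Vb V x y (fst ?r)"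
      unfolding is_arg_max_linorder by auto
  qed
qed

lemma bsum_reverse: "bsum Cb Vb V (\<lambda>l. y (T + 1 - l)) S t = fsum Cb Vb V y S (T + 1 - t)"
  unfolding bsum_def fsum_def by (rule sum.cong) (simp_all add: algebra_simps)

lemma image_reverse:
  fixes A :: "ineq set"
  shows "(\<lambda>(S, t, \<eta>). (S, T + 1 - t, \<eta>)) ` A = {(S, t, \<eta>). (S, T + 1 - t, \<eta>) \<in> A}"
proof -
  have "(S, t, \<eta>) = (\<lambda>(S, t, \<eta>). (S, T + 1 - t, \<eta>)) (S, T + 1 - t, \<eta>)"
    for S :: "int set" and t :: int and \<eta> :: real
    by simp
  then show ?thesis by (force simp: image_iff)
qed

lemma image_triple_id: "(\<lambda>(a, b, c). (a, b, c)) ` A = A"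
proof -
  have "(\<lambda>(a, b, c). (a, b, c)) = id" by auto
  then show ?thesis by simp
qed

lemma F1_most_violated: "most_violated_linear_time F1 viol1"
proof (rule most_violated_linear_time_Fgen[where \<tau>="\<lambda>T t. t" and P="\<lambda>Cb Vb. Cb" and ip=0 and e=0 and f=0
    and g=0 and lo=0 and M="\<lambda>T L. min (L - 1) (T - 2)" and Le="\<lambda>L. 0" and tmin="\<lambda>T. 1" and tmax="\<lambda>T. T"])
  fix T L :: int and Cb Vb V :: real assume "0 < V" "V \<le> Cb - Vb"
  then show "F1 T L Cb Vb V = (\<lambda>(S, t, \<eta>). (S, t, \<eta>)) ` Fgen 0 (min (L - 1) (T - 2)) 0 1 T Cb Vb V"
    unfolding image_triple_id F1_def Fgen_def by (auto simp: min.assoc)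
qed (auto simp: o_def)

lemma F2_most_violated: "most_violated_linear_time F2 viol2"
proof (rule most_violated_linear_time_Fgen[where \<tau>="\<lambda>T t. T + 1 - t" and P="\<lambda>Cb Vb. Cb" and ip=0 and e=0
    and f=0 and g=0 and lo=0 and M="\<lambda>T L. min (L - 1) (T - 2)" and Le="\<lambda>L. 0" and tmin="\<lambda>T. 1" and tmax="\<lambda>T. T"])
  fix T L :: int and Cb Vb V :: real assume "0 < V" "V \<le> Cb - Vb"
  then show "F2 T L Cb Vb V = (\<lambda>(S, t, \<eta>). (S, T + 1 - t, \<eta>)) ` Fgen 0 (min (L - 1) (T - 2)) 0 1 T Cb Vb V"
    unfolding image_reverse F2_def Fgen_def by (auto simp: min.assoc)
qed (auto simp: o_def bsum_reverse)

lemma F3_most_violated: "most_violated_linear_time F3 viol3"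
proof (rule most_violated_linear_time_Fgen[where \<tau>="\<lambda>T t. t" and P="\<lambda>Cb Vb. Cb" and ip=0 and e=0 and f=0
    and g=1 and lo=0 and M="\<lambda>T L. min (L - 1) (T - 3)" and Le="\<lambda>L. L - 1" and tmin="\<lambda>T. 1"
    and tmax="\<lambda>T. T - 1"])
  fix T L :: int and Cb Vb V :: real
  show "F3 T L Cb Vb V = (\<lambda>(S, t, \<eta>). (S, t, \<eta>)) ` Fgen 0 (min (L - 1) (T - 3)) (L - 1) 1 (T - 1) Cb Vb V"
    unfolding image_triple_id F3_def Fgen_def by (auto simp: min.assoc)
qed (auto simp: o_def algebra_simps)

lemma F4_most_violated: "most_violated_linear_time F4 viol4"
proof (rule most_violated_linear_time_Fgen[where \<tau>="\<lambda>T t. T + 1 - t" and P="\<lambda>Cb Vb. Cb" and ip=0 and e=0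
    and f=0 and g=1 and lo=0 and M="\<lambda>T L. min (L - 1) (T - 3)" and Le="\<lambda>L. L - 1" and tmin="\<lambda>T. 1"
    and tmax="\<lambda>T. T - 1"])
  fix T L :: int and Cb Vb V :: real
  show "F4 T L Cb Vb V = (\<lambda>(S, t, \<eta>). (S, T + 1 - t, \<eta>)) ` Fgen 0 (min (L - 1) (T - 3)) (L - 1) 1 (T - 1) Cb Vb V"
    unfolding image_reverse F4_def Fgen_def by (auto simp: min.assoc)
qed (auto simp: o_def bsum_reverse algebra_simps)

lemma F5_most_violated: "most_violated_linear_time F5 viol5"
proof (rule most_violated_linear_time_Fgen[where \<tau>="\<lambda>T t. t" and P="\<lambda>Cb Vb. Vb" and ip=3 and e="-1" and f="-1"
    and g=0 and lo=1 and M="\<lambda>T L. min L (T - 2)" and Le="\<lambda>L. L" and tmin="\<lambda>T. 2" and tmax="\<lambda>T. T"])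
  fix T L :: int and Cb Vb V :: real
  show "F5 T L Cb Vb V = (\<lambda>(S, t, \<eta>). (S, t, \<eta>)) ` Fgen 1 (min L (T - 2)) L 2 T Cb Vb V"
    unfolding image_triple_id F5_def Fgen_def by (auto simp: min.assoc)
qed (auto simp: o_def algebra_simps)

lemma F6_most_violated: "most_violated_linear_time F6 viol6"
proof (rule most_violated_linear_time_Fgen[where \<tau>="\<lambda>T t. T + 1 - t" and P="\<lambda>Cb Vb. Vb" and ip=3 and e="-1"
    and f="-1" and g=0 and lo=1 and M="\<lambda>T L. min L (T - 2)" and Le="\<lambda>L. L" and tmin="\<lambda>T. 2" and tmax="\<lambda>T. T"])
  fix T L :: int and Cb Vb V :: real
  show "F6 T L Cb Vb V = (\<lambda>(S, t, \<eta>). (S, T + 1 - t, \<eta>)) ` Fgen 1 (min L (T - 2)) L 2 T Cb Vb V"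
    unfolding image_reverse F6_def Fgen_def by (auto simp: min.assoc)
qed (auto simp: o_def bsum_reverse algebra_simps)

theorem proposition7:
  shows "most_violated_linear_time F1 viol1 \<and> most_violated_linear_time F2 viol2
    \<and> most_violated_linear_time F3 viol3 \<and> most_violated_linear_time F4 viol4
    \<and> most_violated_linear_time F5 viol5 \<and> most_violated_linear_time F6 viol6"
  using F1_most_violated F2_most_violated F3_most_violated F4_most_violated F5_most_violated F6_most_violated
  by blast

end
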